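(* Let $(D_d)_{d\in\mathbb N}$ be a sequence of convex sets satisfying Property (P), let $L_{0,d},L_{1,d}>0$ with $\lim_{d\to\infty}L_{1,d}\,d=0$, and let \[ C_d^1(L)=\{f\in C^1(D_d)\mid\|f\|_\infty\le1,\ \operatorname{Lip}(f)\le L_{0,d},\ \operatorname{Lip}(\nabla f)\le L_{1,d}\},\qquad F_d^2=\{f\in C^1(D_d)\mid\|f\|_\infty\le1,\ \operatorname{Lip}(\nabla f)\le L_{1,d}\}. \] Then for every $\varepsilon\in(0,1)$, $n(\varepsilon,C_d^1(L))=n(\varepsilon,F_d^2)=1$ for all $d\ge d(\varepsilon)$ large enough.
   Context: Property (P): $D_d\subset\mathbb R^d$ open with $\lambda_d(D_d)=1$ and there exist $x_d^*\in D_d$ and $R<\infty$ with $\lim_{d\to\infty}\lambda_d(\{x\in D_d\mid\|x-x_d^*\|_2\ge R\sqrt d\})=0$. Lipschitz constants are w.r.t. Euclidean norms. $n(\varepsilon,F_d)$: minimal number $n\ge0$ of (possibly adaptive) function values such that some algorithm $\phi(f(x_1),\dots,f(x_n))$ has worst-case error $\sup_{f\in F_d}|\int_{D_d}f-\phi(\dots)|\le\varepsilon$. *)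

theory Defs
  imports "HOL-Probability.Probability"
begin

text \<open>Euclidean space R^d is modelled as the extensional functions
  PiE {..<d} (\<lambda>_. UNIV) of type nat \<Rightarrow> real (coordinates 0..d-1),
  with the product Lebesgue(-Borel) measure.\<close>

definition Rd :: "nat \<Rightarrow> (nat \<Rightarrow> real) set" where
  "Rd d = PiE {..<d} (\<lambda>_. UNIV)"

definition lebd :: "nat \<Rightarrow> (nat \<Rightarrow> real) measure" where
  "lebd d = PiM {..<d} (\<lambda>_. lborel)"

definition distd :: "nat \<Rightarrow> (nat \<Rightarrow> real) \<Rightarrow> (nat \<Rightarrow> real) \<Rightarrow> real" where
  "distd d x y = sqrt (\<Sum>i<d. (x i - y i)^2)"

definition innerd :: "nat \<Rightarrow> (nat \<Rightarrow> real) \<Rightarrow> (nat \<Rightarrow> real) \<Rightarrow> real" where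
  "innerd d x y = (\<Sum>i<d. x i * y i)"

definition open_d :: "nat \<Rightarrow> (nat \<Rightarrow> real) set \<Rightarrow> bool" where
  "open_d d D \<longleftrightarrow> D \<subseteq> Rd d \<and>
     (\<forall>x\<in>D. \<exists>e>0. \<forall>y\<in>Rd d. distd d x y < e \<longrightarrow> y \<in> D)"

definition convex_d :: "nat \<Rightarrow> (nat \<Rightarrow> real) set \<Rightarrow> bool" where
  "convex_d d D \<longleftrightarrow> (\<forall>x\<in>D. \<forall>y\<in>D. \<forall>t::real. 0 \<le> t \<and> t \<le> 1 \<longrightarrow>
      restrict (\<lambda>i. (1 - t) * x i + t * y i) {..<d} \<in> D)"

definition property_P :: "(nat \<Rightarrow> (nat \<Rightarrow> real) set) \<Rightarrow> bool" where
  "property_P D \<longleftrightarrow>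
     (\<forall>d\<ge>1. open_d d (D d) \<and> emeasure (lebd d) (D d) = 1) \<and>
     (\<exists>xs. \<exists>R::real. (\<forall>d\<ge>1. xs d \<in> D d) \<and>
        (\<lambda>d. measure (lebd d) {x \<in> D d. distd d x (xs d) \<ge> R * sqrt (real d)})
          \<longlonglongrightarrow> 0)"

definition is_grad_on :: "nat \<Rightarrow> (nat \<Rightarrow> real) set \<Rightarrow> ((nat \<Rightarrow> real) \<Rightarrow> real)
    \<Rightarrow> ((nat \<Rightarrow> real) \<Rightarrow> (nat \<Rightarrow> real)) \<Rightarrow> bool" where
  "is_grad_on d D f g \<longleftrightarrow> (\<forall>x\<in>D. g x \<in> Rd d \<and>
     (\<forall>e>0. \<exists>\<delta>>0. \<forall>y\<in>D. distd d y x < \<delta> \<longrightarrow>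
        \<bar>f y - f x - innerd d (g x) (\<lambda>i. y i - x i)\<bar> \<le> e * distd d y x))"

definition cont_on_d :: "nat \<Rightarrow> (nat \<Rightarrow> real) set \<Rightarrow> ((nat \<Rightarrow> real) \<Rightarrow> (nat \<Rightarrow> real)) \<Rightarrow> bool" where
  "cont_on_d d D g \<longleftrightarrow> (\<forall>x\<in>D. \<forall>e>0. \<exists>\<delta>>0. \<forall>y\<in>D.
      distd d y x < \<delta> \<longrightarrow> distd d (g y) (g x) < e)"

definition lip_d :: "nat \<Rightarrow> (nat \<Rightarrow> real) set \<Rightarrow> ((nat \<Rightarrow> real) \<Rightarrow> real) \<Rightarrow> real \<Rightarrow> bool" where
  "lip_d d D f L \<longleftrightarrow> (\<forall>x\<in>D. \<forall>y\<in>D. \<bar>f x - f y\<bar> \<le> L * distd d x y)"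

definition lip_grad_d :: "nat \<Rightarrow> (nat \<Rightarrow> real) set \<Rightarrow> ((nat \<Rightarrow> real) \<Rightarrow> (nat \<Rightarrow> real)) \<Rightarrow> real \<Rightarrow> bool" where
  "lip_grad_d d D g L \<longleftrightarrow> (\<forall>x\<in>D. \<forall>y\<in>D. distd d (g x) (g y) \<le> L * distd d x y)"

definition sup_le1 :: "(nat \<Rightarrow> real) set \<Rightarrow> ((nat \<Rightarrow> real) \<Rightarrow> real) \<Rightarrow> bool" where
  "sup_le1 D f \<longleftrightarrow> (\<forall>x\<in>D. \<bar>f x\<bar> \<le> 1)"

definition C1L :: "nat \<Rightarrow> (nat \<Rightarrow> real) set \<Rightarrow> real \<Rightarrow> real \<Rightarrow> ((nat \<Rightarrow> real) \<Rightarrow> real) set" where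
  "C1L d D L0 L1 = {f. sup_le1 D f \<and> lip_d d D f L0 \<and>
      (\<exists>g. is_grad_on d D f g \<and> cont_on_d d D g \<and> lip_grad_d d D g L1)}"

definition F2 :: "nat \<Rightarrow> (nat \<Rightarrow> real) set \<Rightarrow> real \<Rightarrow> ((nat \<Rightarrow> real) \<Rightarrow> real) set" where
  "F2 d D L1 = {f. sup_le1 D f \<and>
      (\<exists>g. is_grad_on d D f g \<and> cont_on_d d D g \<and> lip_grad_d d D g L1)}"

fun info :: "(nat \<Rightarrow> real list \<Rightarrow> 'a) \<Rightarrow> ('a \<Rightarrow> real) \<Rightarrow> nat \<Rightarrow> real list" where
  "info P f 0 = []"
| "info P f (Suc k) = info P f k @ [f (P k (info P f k))]"

definition achieves :: "nat \<Rightarrow> (nat \<Rightarrow> real) set \<Rightarrow> ((nat \<Rightarrow> real) \<Rightarrow> real) set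
    \<Rightarrow> nat \<Rightarrow> real \<Rightarrow> bool" where
  "achieves d D F n \<epsilon> \<longleftrightarrow> (\<exists>(P :: nat \<Rightarrow> real list \<Rightarrow> (nat \<Rightarrow> real)) (\<phi> :: real list \<Rightarrow> real).
      (\<forall>k ys. P k ys \<in> D) \<and>
      (\<forall>f\<in>F. \<bar>(LINT x:D|lebd d. f x) - \<phi> (info P f n)\<bar> \<le> \<epsilon>))"

definition n_compl :: "nat \<Rightarrow> (nat \<Rightarrow> real) set \<Rightarrow> ((nat \<Rightarrow> real) \<Rightarrow> real) set \<Rightarrow> real \<Rightarrow> nat" where
  "n_compl d D F \<epsilon> = (LEAST n. achieves d D F n \<epsilon>)"

end

theory Submission
  imports Defs
begin

text \<open>For large \<open>d\<close> one function value at a well chosen point \<open>p\<close> integrates every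
  \<open>f \<in> F\<^sup>2\<^sub>d\<close> to accuracy \<open>\<epsilon>\<close>. By Property (P) all but a small mass of \<open>D\<^sub>d\<close> lies in
  \<open>K = D\<^sub>d \<inter> B(x\<^sup>*\<^sub>d, \<rho>)\<close> with \<open>\<rho> = R \<surd>d\<close>. On \<open>K\<close> the Taylor bound
  \<open>\<bar>f x - f p - \<nabla>f p \<bullet> (x - p)\<bar> \<le> L\<^sub>1 \<parallel>x - p\<parallel>\<^sup>2 \<le> 4 R\<^sup>2 L\<^sub>1 d\<close> tends to zero, and the linear
  term integrates to almost zero when \<open>p\<close> is almost the centroid of \<open>K\<close>. Instead of showing that
  the exact centroid lies in \<open>K\<close>, we take for \<open>p\<close> the volume-weighted average of one
  representative per cell of a fine grid: it lies in \<open>K\<close> by convexity, and its first moments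
  are off by at most the mesh size. Zero function values do not suffice, since both classes
  contain the constants \<open>\<plusminus>1\<close>.\<close>

lemma distd_eq_L2_set: "distd d x y = L2_set (\<lambda>i. x i - y i) {..<d}"
  by (simp add: distd_def L2_set_def)

lemma distd_nonneg: "0 \<le> distd d x y"
  by (simp add: distd_def sum_nonneg)

lemma distd_commute: "distd d x y = distd d y x"
  unfolding distd_def by (simp add: power2_commute)

lemma distd_triangle: "distd d x z \<le> distd d x y + distd d y z"
proof -
  have "distd d x z = L2_set (\<lambda>i. (x i - y i) + (y i - z i)) {..<d}"
    by (simp add: distd_eq_L2_set)
  also have "\<dots> \<le> distd d x y + distd d y z"
    unfolding distd_eq_L2_set by (rule L2_set_triangle_ineq)
  finally show ?thesis .
qed

lemma distd_restrict: "distd d (restrict x {..<d}) (restrict y {..<d}) = distd d x y"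
  unfolding distd_def by simp

lemma abs_component_diff_le_distd: "i < d \<Longrightarrow> \<bar>x i - y i\<bar> \<le> distd d x y"
  unfolding distd_eq_L2_set using member_le_L2_set[of "{..<d}" i "\<lambda>i. \<bar>x i - y i\<bar>"]
  by (simp add: L2_set_def)

lemma abs_innerd_le: "\<bar>innerd d u v\<bar> \<le> L2_set u {..<d} * L2_set v {..<d}"
proof -
  have "\<bar>innerd d u v\<bar> \<le> (\<Sum>i<d. \<bar>u i\<bar> * \<bar>v i\<bar>)"
    unfolding innerd_def by (rule order_trans[OF sum_abs]) (simp add: abs_mult)
  also have "\<dots> \<le> L2_set u {..<d} * L2_set v {..<d}" by (rule L2_set_mult_ineq)
  finally show ?thesis .
qed

lemma continuous_on_distd: "continuous_on UNIV (\<lambda>x. distd d x y)"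
  unfolding distd_def by (intro continuous_intros) simp_all

lemma restrict_Rd: "x \<in> Rd d \<Longrightarrow> restrict x {..<d} = x"
  unfolding Rd_def by (simp add: extensional_restrict PiE_iff)

lemma restrict_in_Rd: "restrict x {..<d} \<in> Rd d"
  unfolding Rd_def by simp

lemma space_lebd: "space (lebd d) = Rd d"
  unfolding lebd_def Rd_def by (simp add: space_PiM)

lemma innerd_diff_left: "innerd d a v - innerd d b v = innerd d (\<lambda>i. a i - b i) v"
  unfolding innerd_def by (simp add: sum_subtractf algebra_simps)

lemma is_grad_on_segment_derivative:
  assumes cv: "convex_d d D" and gr: "is_grad_on d D f g"
    and x: "x \<in> D" and y: "y \<in> D" and t: "t \<in> {0..1}"
  defines "z \<equiv> \<lambda>t. restrict (\<lambda>i. (1 - t) * x i + t * y i) {..<d}"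
  shows "((\<lambda>t. f (z t)) has_field_derivative innerd d (g (z t)) (\<lambda>i. y i - x i))
           (at t within {0..1})"
  unfolding has_field_derivative_def has_derivative_within_alt
proof (intro conjI allI impI)
  define \<Delta> where "\<Delta> = distd d y x"
  have \<Delta>: "0 \<le> \<Delta>" by (simp add: \<Delta>_def distd_nonneg)
  have zD: "z s \<in> D" if "s \<in> {0..1}" for s
    using cv x y that unfolding convex_d_def z_def by auto
  have dist_z: "distd d (z s) (z t) = \<bar>s - t\<bar> * \<Delta>" for s
  proof -
    have "distd d (z s) (z t) = L2_set (\<lambda>i. \<bar>s - t\<bar> * (y i - x i)) {..<d}"
      unfolding z_def distd_eq_L2_set L2_set_def
      by (intro arg_cong[where f=sqrt] sum.cong) (auto simp: power2_eq_square algebra_simps)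
    then show ?thesis by (simp add: \<Delta>_def distd_eq_L2_set L2_set_right_distrib)
  qed
  have inner_z: "innerd d a (\<lambda>i. z s i - z t i) = (s - t) * innerd d a (\<lambda>i. y i - x i)" for a s
    unfolding innerd_def z_def by (auto simp: sum_distrib_left algebra_simps intro!: sum.cong)
  show "bounded_linear ((*) (innerd d (g (z t)) (\<lambda>i. y i - x i)))"
    by (rule bounded_linear_mult_right)
  fix e :: real assume e: "0 < e"
  define e' where "e' = e / (\<Delta> + 1)"
  have e': "0 < e'" "e' * \<Delta> \<le> e" using e \<Delta> by (simp_all add: e'_def field_simps)
  obtain \<delta> where \<delta>: "\<delta> > 0" and approx: "\<And>w. w \<in> D \<Longrightarrow> distd d w (z t) < \<delta> \<Longrightarrow>
      \<bar>f w - f (z t) - innerd d (g (z t)) (\<lambda>i. w i - z t i)\<bar> \<le> e' * distd d w (z t)"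
    using gr zD[OF t] e' unfolding is_grad_on_def by blast
  show "\<exists>\<delta>>0. \<forall>s\<in>{0..1}. norm (s - t) < \<delta> \<longrightarrow>
      norm (f (z s) - f (z t) - innerd d (g (z t)) (\<lambda>i. y i - x i) * (s - t)) \<le> e * norm (s - t)"
  proof (intro exI[of _ "\<delta> / (\<Delta> + 1)"] conjI ballI impI)
    show "0 < \<delta> / (\<Delta> + 1)" using \<delta> \<Delta> by simp
    fix s :: real assume s: "s \<in> {0..1}" and st: "norm (s - t) < \<delta> / (\<Delta> + 1)"
    have "\<bar>s - t\<bar> * \<Delta> \<le> \<bar>s - t\<bar> * (\<Delta> + 1)" by (simp add: mult_left_mono)
    also have "\<dots> < \<delta>" using st \<Delta> by (simp add: pos_less_divide_eq)
    finally have "distd d (z s) (z t) < \<delta>" by (simp add: dist_z)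
    from approx[OF zD[OF s] this]
    have "\<bar>f (z s) - f (z t) - (s - t) * innerd d (g (z t)) (\<lambda>i. y i - x i)\<bar> \<le> e' * \<Delta> * \<bar>s - t\<bar>"
      by (simp add: inner_z dist_z mult_ac)
    also have "\<dots> \<le> e * \<bar>s - t\<bar>" using e' by (simp add: mult_right_mono)
    finally show "norm (f (z s) - f (z t) - innerd d (g (z t)) (\<lambda>i. y i - x i) * (s - t))
        \<le> e * norm (s - t)" by (simp add: mult.commute)
  qed
qed

lemma lip_grad_d_taylor_bound:
  assumes cv: "convex_d d D" and sub: "D \<subseteq> Rd d"
    and gr: "is_grad_on d D f g" and lip: "lip_grad_d d D g L" and L: "0 \<le> L"
    and x: "x \<in> D" and y: "y \<in> D"
  shows "\<bar>f y - f x - innerd d (g x) (\<lambda>i. y i - x i)\<bar> \<le> L * (distd d y x)\<^sup>2"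
proof -
  define z where "z t = restrict (\<lambda>i. (1 - t) * x i + t * y i) {..<d}" for t
  define \<Delta> where "\<Delta> = distd d y x"
  have \<Delta>: "0 \<le> \<Delta>" by (simp add: \<Delta>_def distd_nonneg)
  have z0: "z 0 = x" and z1: "z 1 = y"
    using restrict_Rd[of x d] restrict_Rd[of y d] sub x y by (auto simp: z_def)
  have zD: "z t \<in> D" if "t \<in> {0..1}" for t
    using cv x y that unfolding convex_d_def z_def by auto
  have dist_zx: "distd d (z t) x = t * \<Delta>" if "t \<in> {0..1}" for t
  proof -
    have "distd d (z t) x = L2_set (\<lambda>i. t * (y i - x i)) {..<d}"
      using restrict_Rd[of x d] sub x
      unfolding z_def distd_eq_L2_set by (intro L2_set_cong) (auto simp: algebra_simps)
    then show ?thesis using that by (simp add: \<Delta>_def distd_eq_L2_set L2_set_right_distrib)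
  qed
  define c where "c = innerd d (g x) (\<lambda>i. y i - x i)"
  have deriv: "((\<lambda>t. f (z t) - t * c) has_field_derivative innerd d (g (z t)) (\<lambda>i. y i - x i) - c)
      (at t within {0..1})" if "t \<in> {0..1}" for t
    using is_grad_on_segment_derivative[OF cv gr x y that] unfolding z_def[symmetric]
    by (auto intro!: derivative_eq_intros)
  have "norm (innerd d (g (z t)) (\<lambda>i. y i - x i) - c) \<le> L * \<Delta>\<^sup>2" if t: "t \<in> {0..1}" for t
  proof -
    have "norm (innerd d (g (z t)) (\<lambda>i. y i - x i) - c)
        = \<bar>innerd d (\<lambda>i. g (z t) i - g x i) (\<lambda>i. y i - x i)\<bar>"
      by (simp add: c_def innerd_diff_left)
    also have "\<dots> \<le> distd d (g (z t)) (g x) * \<Delta>"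
      using abs_innerd_le by (simp add: \<Delta>_def distd_eq_L2_set)
    also have "\<dots> \<le> L * (t * \<Delta>) * \<Delta>"
      using lip zD[OF t] x \<Delta> dist_zx[OF t] unfolding lip_grad_d_def by (intro mult_right_mono) force+
    also have "\<dots> \<le> L * \<Delta>\<^sup>2"
      using t L \<Delta> by (simp add: power2_eq_square mult_left_le_one_le mult_le_one mult.assoc mult_left_mono mult_right_mono)
    finally show ?thesis .
  qed
  then have "norm ((f (z 1) - 1 * c) - (f (z 0) - 0 * c)) \<le> L * \<Delta>\<^sup>2 * norm (1 - 0 :: real)"
    by (intro field_differentiable_bound[OF convex_real_interval(5) deriv]) auto
  then show ?thesis by (simp add: z0 z1 c_def \<Delta>_def)
qed

lemma abs_grad_component_le:
  assumes cv: "convex_d d D" and sub: "D \<subseteq> Rd d"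
    and gr: "is_grad_on d D f g" and lip: "lip_grad_d d D g L" and L: "0 \<le> L"
    and sup: "sup_le1 D f" and x: "x \<in> D" and r: "0 < r"
    and ball: "\<forall>y\<in>Rd d. distd d x y < r \<longrightarrow> y \<in> D" and i: "i < d"
  shows "\<bar>g x i\<bar> \<le> 4 / r + L * r"
proof -
  define t where "t = r / 2"
  have t: "0 < t" using r by (simp add: t_def)
  define y where "y = restrict (\<lambda>j. x j + (if j = i then t else 0)) {..<d}"
  have "distd d x y = sqrt (\<Sum>j<d. if j = i then t\<^sup>2 else 0)"
    unfolding distd_def y_def by (intro arg_cong[where f=sqrt] sum.cong) auto
  then have dist_xy: "distd d x y = t" using i t by simp
  have yD: "y \<in> D" using ball dist_xy r by (simp add: y_def restrict_in_Rd t_def)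
  have "innerd d (g x) (\<lambda>j. y j - x j) = (\<Sum>j<d. if j = i then t * g x i else 0)"
    unfolding innerd_def y_def by (intro sum.cong) auto
  then have "innerd d (g x) (\<lambda>j. y j - x j) = t * g x i" using i by simp
  then have "\<bar>f y - f x - t * g x i\<bar> \<le> L * t\<^sup>2"
    using lip_grad_d_taylor_bound[OF cv sub gr lip L x yD] dist_xy by (simp add: distd_commute)
  moreover have "\<bar>f y\<bar> \<le> 1" "\<bar>f x\<bar> \<le> 1" using sup yD x unfolding sup_le1_def by auto
  ultimately have "t * \<bar>g x i\<bar> \<le> 2 + L * t\<^sup>2" using t by (simp add: abs_mult)
  then have "\<bar>g x i\<bar> \<le> (2 + L * t\<^sup>2) / t" using t by (simp add: field_simps)
  also have "\<dots> = 4 / r + L * (r / 2)" using r by (simp add: t_def field_simps power2_eq_square)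
  also have "\<dots> \<le> 4 / r + L * r" using L r by (simp add: mult_left_mono)
  finally show ?thesis .
qed

lemma abs_grad_component_le_near:
  assumes cv: "convex_d d D" and sub: "D \<subseteq> Rd d"
    and gr: "is_grad_on d D f g" and lip: "lip_grad_d d D g L" and L: "0 \<le> L"
    and sup: "sup_le1 D f" and x: "x \<in> D" and r: "0 < r"
    and ball: "\<forall>y\<in>Rd d. distd d x y < r \<longrightarrow> y \<in> D" and i: "i < d"
    and y: "y \<in> D" "distd d y x \<le> \<rho>"
  shows "\<bar>g y i\<bar> \<le> 4 / r + L * r + L * \<rho>"
proof -
  have "\<bar>g y i - g x i\<bar> \<le> distd d (g y) (g x)" by (rule abs_component_diff_le_distd[OF i])
  also have "\<dots> \<le> L * distd d y x" using lip x y by (simp add: lip_grad_d_def)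
  also have "\<dots> \<le> L * \<rho>" using y L by (intro mult_left_mono) auto
  finally show ?thesis using abs_grad_component_le[OF cv sub gr lip L sup x r ball i] by simp
qed

lemma is_grad_on_continuous:
  assumes gr: "is_grad_on d D f g" and x: "x \<in> D" and e: "0 < e"
  shows "\<exists>\<delta>>0. \<forall>y\<in>D. distd d y x < \<delta> \<longrightarrow> \<bar>f y - f x\<bar> < e"
proof -
  obtain \<delta> where \<delta>: "\<delta> > 0" and approx: "\<And>y. y \<in> D \<Longrightarrow> distd d y x < \<delta> \<Longrightarrow>
      \<bar>f y - f x - innerd d (g x) (\<lambda>i. y i - x i)\<bar> \<le> 1 * distd d y x"
    using gr x unfolding is_grad_on_def by (meson zero_less_one)
  define G where "G = L2_set (g x) {..<d} + 1"
  have G: "0 < G" by (simp add: G_def add_nonneg_pos)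
  show ?thesis
  proof (intro exI[of _ "min \<delta> (e / G)"] conjI ballI impI)
    show "0 < min \<delta> (e / G)" using \<delta> e G by simp
    fix y assume y: "y \<in> D" and dist_yx: "distd d y x < min \<delta> (e / G)"
    have "\<bar>f y - f x\<bar> \<le> \<bar>innerd d (g x) (\<lambda>i. y i - x i)\<bar> + distd d y x"
      using approx[OF y] dist_yx by linarith
    also have "\<dots> \<le> G * distd d y x"
      using abs_innerd_le[of d "g x" "\<lambda>i. y i - x i"] by (simp add: G_def distd_eq_L2_set algebra_simps)
    also have "\<dots> < G * (e / G)" using dist_yx G by (intro mult_strict_left_mono) auto
    finally show "\<bar>f y - f x\<bar> < e" using G by simp
  qed
qed

lemma borel_measurable_lebd_id: "(\<lambda>x. x) \<in> borel_measurable (lebd d)"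
proof (rule measurable_coordinatewise_then_product)
  fix i :: nat
  show "(\<lambda>x. x i) \<in> borel_measurable (lebd d)"
  proof (cases "i < d")
    case True
    then show ?thesis unfolding lebd_def
      using measurable_component_singleton[of i "{..<d}" "\<lambda>_. lborel"] by simp
  next
    case False
    then have "(\<lambda>x. x i) \<in> borel_measurable (lebd d) \<longleftrightarrow> (\<lambda>x. undefined :: real) \<in> borel_measurable (lebd d)"
      by (intro measurable_cong) (auto simp: space_lebd Rd_def PiE_iff extensional_def)
    then show ?thesis by simp
  qed
qed

lemma borel_measurable_lebd_component[measurable]: "(\<lambda>x. x i) \<in> borel_measurable (lebd d)"
  by (rule measurable_compose[OF borel_measurable_lebd_id]) simp

lemma open_distd_ball: "open {w. distd d w y < e}"
  by (intro open_Collect_less continuous_on_distd continuous_on_const)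

lemma is_grad_on_borel_measurable:
  assumes op: "open_d d D" and gr: "is_grad_on d D f g"
  shows "(\<lambda>x. indicator D x * f x) \<in> borel_measurable (lebd d)"
proof -
  define U where "U = {y. restrict y {..<d} \<in> D}"
  define F where "F y = f (restrict y {..<d})" for y
  have "open U"
  proof (subst open_subopen, intro ballI)
    fix y assume y: "y \<in> U"
    then obtain e where "e > 0" and ball: "\<forall>z\<in>Rd d. distd d (restrict y {..<d}) z < e \<longrightarrow> z \<in> D"
      using op unfolding open_d_def U_def by blast
    then have "{w. distd d w y < e} \<subseteq> U"
      using restrict_in_Rd by (fastforce simp: U_def distd_restrict distd_commute)
    then show "\<exists>T. open T \<and> y \<in> T \<and> T \<subseteq> U"
      using open_distd_ball \<open>e > 0\<close> by (intro exI[of _ "{w. distd d w y < e}"]) (auto simp: distd_def)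
  qed
  have "continuous_on U F"
    unfolding continuous_on_def
  proof (intro ballI)
    fix y assume y: "y \<in> U"
    show "(F \<longlongrightarrow> F y) (at y within U)"
      unfolding tendsto_iff
    proof (intro allI impI)
      fix e :: real assume "0 < e"
      then obtain \<delta> where "\<delta> > 0" and close: "\<forall>z\<in>D. distd d z (restrict y {..<d}) < \<delta> \<longrightarrow>
          \<bar>f z - f (restrict y {..<d})\<bar> < e"
        using is_grad_on_continuous[OF gr] y unfolding U_def by blast
      show "\<forall>\<^sub>F w in at y within U. dist (F w) (F y) < e"
        unfolding eventually_at_topological
        using open_distd_ball \<open>\<delta> > 0\<close> close
        by (intro exI[of _ "{w. distd d w y < \<delta>}"])
          (auto simp: U_def F_def dist_real_def distd_restrict distd_def)
    qed
  qed
  then have "(\<lambda>y. indicator U y *\<^sub>R F y) \<in> borel_measurable borel"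
    using \<open>open U\<close> by (intro borel_measurable_continuous_on_indicator) auto
  then have "(\<lambda>x. indicator U x *\<^sub>R F x) \<in> borel_measurable (lebd d)"
    by (rule measurable_compose[OF borel_measurable_lebd_id])
  then show ?thesis
    by (rule measurable_cong[THEN iffD1, rotated])
      (auto simp: space_lebd restrict_Rd U_def F_def indicator_def)
qed

lemma integrable_indicator_mult_bounded:
  fixes F :: "'a \<Rightarrow> real"
  assumes "A \<in> sets M" and "emeasure M A < \<infinity>"
    and "(\<lambda>x. indicator A x * F x) \<in> borel_measurable M"
    and "\<And>x. x \<in> A \<Longrightarrow> \<bar>F x\<bar> \<le> B"
  shows "integrable M (\<lambda>x. indicator A x * F x)"
  by (rule integrableI_bounded_set[where A=A and B=B]) (use assms in \<open>auto simp: indicator_def\<close>)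

lemma abs_integral_indicator_mult_le:
  fixes F :: "'a \<Rightarrow> real"
  assumes A: "A \<in> sets M" and fin: "emeasure M A < \<infinity>"
    and meas: "(\<lambda>x. indicator A x * F x) \<in> borel_measurable M"
    and bound: "\<And>x. x \<in> A \<Longrightarrow> \<bar>F x\<bar> \<le> B"
  shows "\<bar>\<integral>x. indicator A x * F x \<partial>M\<bar> \<le> B * measure M A"
proof -
  have "\<bar>\<integral>x. indicator A x * F x \<partial>M\<bar> \<le> (\<integral>x. norm (indicator A x * F x) \<partial>M)"
    using integral_norm_bound[of M "\<lambda>x. indicator A x * F x"] by simp
  also have "\<dots> \<le> (\<integral>x. indicator A x * B \<partial>M)"
  proof (rule integral_mono)
    show "integrable M (\<lambda>x. norm (indicator A x * F x))"
      using integrable_indicator_mult_bounded[OF A fin meas bound] by (rule integrable_norm)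
    show "integrable M (\<lambda>x. indicator A x * B)"
      by (rule integrable_indicator_mult_bounded[where B="\<bar>B\<bar>"]) (use A fin in auto)
  qed (use bound in \<open>auto simp: indicator_def\<close>)
  also have "\<dots> = B * measure M A"
    using A by simp
  finally show ?thesis .
qed

lemma integral_indicator_mult_partition:
  fixes F :: "'a \<Rightarrow> real"
  assumes fin: "finite Z" and A: "\<And>z. z \<in> Z \<Longrightarrow> A z \<in> sets M"
    and A_fin: "\<And>z. z \<in> Z \<Longrightarrow> emeasure M (A z) < \<infinity>"
    and partition: "\<And>x. indicator K x = (\<Sum>z\<in>Z. indicator (A z) x :: real)"
    and A_K: "\<And>z. z \<in> Z \<Longrightarrow> A z \<subseteq> K"
    and meas: "(\<lambda>x. indicator K x * F x) \<in> borel_measurable M"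
    and bound: "\<And>z x. z \<in> Z \<Longrightarrow> x \<in> A z \<Longrightarrow> \<bar>F x\<bar> \<le> B z"
  shows "(\<integral>x. indicator K x * F x \<partial>M) = (\<Sum>z\<in>Z. \<integral>x. indicator (A z) x * F x \<partial>M)"
proof -
  have "integrable M (\<lambda>x. indicator (A z) x * F x)" if z: "z \<in> Z" for z
  proof (rule integrable_indicator_mult_bounded[OF A[OF z] A_fin[OF z] _ bound[OF z]])
    have "(\<lambda>x. indicator (A z) x * F x) = (\<lambda>x. indicator (A z) x * (indicator K x * F x))"
      using A_K[OF z] by (auto simp: indicator_def fun_eq_iff)
    also have "\<dots> \<in> borel_measurable M" using A[OF z] meas by measurable
    finally show "(\<lambda>x. indicator (A z) x * F x) \<in> borel_measurable M" .
  qed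
  moreover have "(\<lambda>x. indicator K x * F x) = (\<lambda>x. \<Sum>z\<in>Z. indicator (A z) x * F x)"
    by (simp add: partition sum_distrib_right)
  ultimately show ?thesis by simp
qed

lemma sum_measure_partition:
  assumes fin: "finite Z" and A: "\<And>z. z \<in> Z \<Longrightarrow> A z \<in> sets M"
    and A_fin: "\<And>z. z \<in> Z \<Longrightarrow> emeasure M (A z) < \<infinity>"
    and partition: "\<And>x. indicator K x = (\<Sum>z\<in>Z. indicator (A z) x :: real)"
    and A_K: "\<And>z. z \<in> Z \<Longrightarrow> A z \<subseteq> K" and K: "K \<in> sets M"
  shows "(\<Sum>z\<in>Z. measure M (A z)) = measure M K"
proof -
  have "(\<integral>x. indicator K x * (1::real) \<partial>M) = (\<Sum>z\<in>Z. \<integral>x. indicator (A z) x * 1 \<partial>M)"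
    by (rule integral_indicator_mult_partition[OF fin A A_fin partition A_K, where B="\<lambda>_. 1"])
      (use K in auto)
  then show ?thesis using A K by simp
qed

lemma abs_integral_indicator_sub_le_of_partition:
  fixes F :: "'a \<Rightarrow> real"
  assumes fin: "finite Z" and A: "\<And>z. z \<in> Z \<Longrightarrow> A z \<in> sets M"
    and A_fin: "\<And>z. z \<in> Z \<Longrightarrow> emeasure M (A z) < \<infinity>"
    and partition: "\<And>x. indicator K x = (\<Sum>z\<in>Z. indicator (A z) x :: real)"
    and A_K: "\<And>z. z \<in> Z \<Longrightarrow> A z \<subseteq> K" and K: "K \<in> sets M"
    and meas: "(\<lambda>x. indicator K x * F x) \<in> borel_measurable M"
    and close: "\<And>z x. z \<in> Z \<Longrightarrow> x \<in> A z \<Longrightarrow> \<bar>F x - r z\<bar> \<le> h"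
    and centre: "(\<Sum>z\<in>Z. measure M (A z) * r z) = measure M K * c"
  shows "\<bar>\<integral>x. indicator K x * (F x - c) \<partial>M\<bar> \<le> h * measure M K"
proof -
  define w where "w z = measure M (A z)" for z
  have int: "integrable M (\<lambda>x. indicator (A z) x * (F x - r z))" if z: "z \<in> Z" for z
  proof (rule integrable_indicator_mult_bounded[OF A[OF z] A_fin[OF z] _ close[OF z]])
    have "(\<lambda>x. indicator (A z) x * (F x - r z))
        = (\<lambda>x. indicator (A z) x * (indicator K x * F x) - indicator (A z) x * r z)"
      using A_K[OF z] by (auto simp: indicator_def fun_eq_iff)
    also have "\<dots> \<in> borel_measurable M" using A[OF z] meas by measurable
    finally show "(\<lambda>x. indicator (A z) x * (F x - r z)) \<in> borel_measurable M" .
  qed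
  have "(\<integral>x. indicator K x * (F x - c) \<partial>M) = (\<Sum>z\<in>Z. \<integral>x. indicator (A z) x * (F x - c) \<partial>M)"
  proof (rule integral_indicator_mult_partition[OF fin A A_fin partition A_K])
    show "(\<lambda>x. indicator K x * (F x - c)) \<in> borel_measurable M"
      using meas K by (simp add: right_diff_distrib) measurable
    show "\<bar>F x - c\<bar> \<le> h + \<bar>r z - c\<bar>" if "z \<in> Z" "x \<in> A z" for z x
      using close[OF that] by linarith
  qed
  also have "\<dots> = (\<Sum>z\<in>Z. (\<integral>x. indicator (A z) x * (F x - r z) \<partial>M) + w z * (r z - c))"
  proof (intro sum.cong refl)
    fix z assume z: "z \<in> Z"
    have "(\<integral>x. indicator (A z) x * (F x - r z) + indicator (A z) x * (r z - c) \<partial>M)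
        = (\<integral>x. indicator (A z) x * (F x - r z) \<partial>M) + w z * (r z - c)"
      using int[OF z] A[OF z] A_fin[OF z] by (simp add: w_def measure_def)
    then show "(\<integral>x. indicator (A z) x * (F x - c) \<partial>M)
        = (\<integral>x. indicator (A z) x * (F x - r z) \<partial>M) + w z * (r z - c)"
      by (simp add: algebra_simps)
  qed
  also have "\<dots> = (\<Sum>z\<in>Z. \<integral>x. indicator (A z) x * (F x - r z) \<partial>M)"
    using centre sum_measure_partition[OF fin A A_fin partition A_K K]
    by (simp add: sum.distrib right_diff_distrib sum_subtractf sum_distrib_right[symmetric] w_def)
  also have "\<bar>\<dots>\<bar> \<le> (\<Sum>z\<in>Z. h * w z)"
    unfolding w_def using close int
    by (intro order_trans[OF sum_abs sum_mono] abs_integral_indicator_mult_le[OF A A_fin]) auto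
  also have "\<dots> = h * measure M K"
    using sum_measure_partition[OF fin A A_fin partition A_K K] by (simp add: w_def sum_distrib_left[symmetric])
  finally show ?thesis .
qed

lemma convex_d_Int_ball:
  assumes cv: "convex_d d D"
  shows "convex_d d {x\<in>D. distd d x x0 < \<rho>}"
  unfolding convex_d_def
proof (intro ballI allI impI)
  fix x y t assume x: "x \<in> {x\<in>D. distd d x x0 < \<rho>}" and y: "y \<in> {x\<in>D. distd d x x0 < \<rho>}"
    and t: "0 \<le> t \<and> t \<le> (1::real)"
  have "distd d (restrict (\<lambda>i. (1 - t) * x i + t * y i) {..<d}) x0
      = L2_set (\<lambda>i. (1 - t) * (x i - x0 i) + t * (y i - x0 i)) {..<d}"
    unfolding distd_eq_L2_set by (rule L2_set_cong) (auto simp: algebra_simps)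
  also have "\<dots> \<le> L2_set (\<lambda>i. (1 - t) * (x i - x0 i)) {..<d} + L2_set (\<lambda>i. t * (y i - x0 i)) {..<d}"
    by (rule L2_set_triangle_ineq)
  also have "\<dots> = (1 - t) * distd d x x0 + t * distd d y x0"
    using t by (simp add: distd_eq_L2_set L2_set_right_distrib)
  also have "\<dots> < \<rho>"
    using x y t by (intro convex_bound_lt) auto
  finally show "restrict (\<lambda>i. (1 - t) * x i + t * y i) {..<d} \<in> {x\<in>D. distd d x x0 < \<rho>}"
    using cv x y t unfolding convex_d_def by blast
qed

lemma convex_d_convex_combination:
  assumes cv: "convex_d d C" and sub: "C \<subseteq> Rd d"
    and "finite S" "S \<noteq> {}" "\<forall>s\<in>S. 0 \<le> w s" "sum w S = 1" "\<forall>s\<in>S. q s \<in> C"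
  shows "restrict (\<lambda>i. \<Sum>s\<in>S. w s * q s i) {..<d} \<in> C"
  using assms(3-)
proof (induction S arbitrary: w rule: finite_ne_induct)
  case (singleton a)
  then have "restrict (\<lambda>i. \<Sum>s\<in>{a}. w s * q s i) {..<d} = q a"
    using restrict_Rd[of "q a" d] sub by auto
  then show ?case using singleton by simp
next
  case (insert a S)
  define W where "W = sum w S"
  have W: "0 \<le> W" "W \<le> 1" "w a = 1 - W" using insert by (auto simp: W_def sum_nonneg)
  show ?case
  proof (cases "W = 0")
    case True
    then have "\<forall>s\<in>S. w s = 0" using insert sum_nonneg_eq_0_iff[of S w] by (simp add: W_def)
    then have "restrict (\<lambda>i. \<Sum>s\<in>insert a S. w s * q s i) {..<d} = restrict (q a) {..<d}"
      using insert True W by (intro restrict_ext) simp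
    also have "\<dots> = q a" using restrict_Rd[of "q a" d] sub insert by auto
    finally show ?thesis using insert by simp
  next
    case False
    define p where "p = restrict (\<lambda>i. \<Sum>s\<in>S. (w s / W) * q s i) {..<d}"
    have "p \<in> C" unfolding p_def
      using insert W False by (intro insert.IH) (auto simp: W_def sum_divide_distrib[symmetric])
    then have "restrict (\<lambda>i. (1 - W) * q a i + W * p i) {..<d} \<in> C"
      using cv insert W unfolding convex_d_def by blast
    also have "restrict (\<lambda>i. (1 - W) * q a i + W * p i) {..<d}
        = restrict (\<lambda>i. \<Sum>s\<in>insert a S. w s * q s i) {..<d}"
      using insert W False by (intro restrict_ext) (simp add: p_def sum_distrib_left)
    finally show ?thesis .
  qed
qed

lemma approximate_centroid_of_partition:
  fixes K :: "(nat \<Rightarrow> real) set"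
  assumes K: "K \<in> sets (lebd d)" and K_fin: "emeasure (lebd d) K < \<infinity>"
    and K_pos: "0 < measure (lebd d) K" and cv: "convex_d d K" and K_Rd: "K \<subseteq> Rd d"
    and fin: "finite Z" and A: "\<And>z. z \<in> Z \<Longrightarrow> A z \<in> sets (lebd d)"
    and A_K: "\<And>z. z \<in> Z \<Longrightarrow> A z \<subseteq> K" and A_ne: "\<And>z. z \<in> Z \<Longrightarrow> A z \<noteq> {}"
    and partition: "\<And>x. indicator K x = (\<Sum>z\<in>Z. indicator (A z) x :: real)"
    and small: "\<And>z x y i. z \<in> Z \<Longrightarrow> x \<in> A z \<Longrightarrow> y \<in> A z \<Longrightarrow> i < d \<Longrightarrow> \<bar>x i - y i\<bar> \<le> h"
  shows "\<exists>p\<in>K. \<forall>i<d. \<bar>\<integral>x. indicator K x * (x i - p i) \<partial>lebd d\<bar> \<le> h * measure (lebd d) K"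
proof -
  define \<mu> where "\<mu> = measure (lebd d) K"
  define w where "w z = measure (lebd d) (A z)" for z
  define rep where "rep z = (SOME x. x \<in> A z)" for z
  define p where "p = restrict (\<lambda>i. \<Sum>z\<in>Z. (w z / \<mu>) * rep z i) {..<d}"
  have \<mu>: "0 < \<mu>" using K_pos by (simp add: \<mu>_def)
  have A_fin: "emeasure (lebd d) (A z) < \<infinity>" if "z \<in> Z" for z
    using emeasure_mono[OF A_K[OF that] K] K_fin by (meson order_le_less_trans)
  have sum_w: "(\<Sum>z\<in>Z. w z) = \<mu>"
    unfolding w_def \<mu>_def by (rule sum_measure_partition[OF fin A A_fin partition A_K K])
  have rep: "rep z \<in> A z" if "z \<in> Z" for z
    using A_ne[OF that] by (simp add: rep_def some_in_eq)
  obtain x where "x \<in> K" using K_pos by force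
  then have "Z \<noteq> {}" using partition[of x] by auto
  then have p: "p \<in> K" unfolding p_def
    using \<mu> sum_w rep A_K
    by (intro convex_d_convex_combination[OF cv K_Rd fin])
      (auto simp: w_def sum_divide_distrib[symmetric])
  have "\<bar>\<integral>x. indicator K x * (x i - p i) \<partial>lebd d\<bar> \<le> h * \<mu>" if i: "i < d" for i
    unfolding \<mu>_def
  proof (rule abs_integral_indicator_sub_le_of_partition[OF fin A A_fin partition A_K K])
    show "(\<lambda>x. indicator K x * x i) \<in> borel_measurable (lebd d)" using K by measurable
    show "\<bar>x i - rep z i\<bar> \<le> h" if "z \<in> Z" "x \<in> A z" for z x
      using small[OF that rep[OF that(1)] i] .
    show "(\<Sum>z\<in>Z. measure (lebd d) (A z) * rep z i) = measure (lebd d) K * p i"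
      using \<mu> i by (simp add: p_def w_def \<mu>_def sum_distrib_left)
  qed
  then show ?thesis using p unfolding \<mu>_def by blast
qed

lemma finite_floor_cells:
  fixes K :: "(nat \<Rightarrow> real) set"
  assumes bounded: "\<And>x i. x \<in> K \<Longrightarrow> i < d \<Longrightarrow> \<bar>x i - c i\<bar> \<le> \<rho>" and h: "0 < h"
  shows "finite ((\<lambda>x. restrict (\<lambda>i. \<lfloor>x i / h\<rfloor>) {..<d}) ` K)"
proof (rule finite_subset)
  show "(\<lambda>x. restrict (\<lambda>i. \<lfloor>x i / h\<rfloor>) {..<d}) ` K
      \<subseteq> PiE {..<d} (\<lambda>i. {\<lfloor>(c i - \<rho>) / h\<rfloor> .. \<lfloor>(c i + \<rho>) / h\<rfloor>})"
  proof (clarsimp simp: PiE_iff)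
    fix x i assume "x \<in> K" "i < d"
    from bounded[OF this] h
    show "\<lfloor>(c i - \<rho>) / h\<rfloor> \<le> \<lfloor>x i / h\<rfloor> \<and> \<lfloor>x i / h\<rfloor> \<le> \<lfloor>(c i + \<rho>) / h\<rfloor>"
      by (intro conjI floor_mono divide_right_mono) (auto simp: abs_le_iff)
  qed
qed (auto intro!: finite_PiE)

lemma exists_approximate_centroid:
  fixes K :: "(nat \<Rightarrow> real) set"
  assumes K: "K \<in> sets (lebd d)" and K_fin: "emeasure (lebd d) K < \<infinity>"
    and K_pos: "0 < measure (lebd d) K" and cv: "convex_d d K" and K_Rd: "K \<subseteq> Rd d"
    and bounded: "\<And>x i. x \<in> K \<Longrightarrow> i < d \<Longrightarrow> \<bar>x i - c i\<bar> \<le> \<rho>"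
    and h: "0 < h"
  shows "\<exists>p\<in>K. \<forall>i<d. \<bar>\<integral>x. indicator K x * (x i - p i) \<partial>lebd d\<bar> \<le> h * measure (lebd d) K"
proof -
  define cell where "cell x = restrict (\<lambda>i. \<lfloor>x i / h\<rfloor>) {..<d}" for x :: "nat \<Rightarrow> real"
  define A where "A z = {x\<in>K. cell x = z}" for z
  have fin: "finite (cell ` K)"
    unfolding cell_def by (rule finite_floor_cells[OF _ h]) (rule bounded)
  show ?thesis
  proof (rule approximate_centroid_of_partition[OF K K_fin K_pos cv K_Rd fin])
    show "A z \<in> sets (lebd d)" if "z \<in> cell ` K" for z
    proof -
      have "z \<in> extensional {..<d}" using that by (auto simp: cell_def)
      then have "A z = K \<inter> {x\<in>space (lebd d). \<forall>i\<in>{..<d}. of_int (z i) \<le> x i / h \<and> x i / h < of_int (z i) + 1}"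
        using K_Rd unfolding A_def cell_def
        by (auto simp: fun_eq_iff extensional_def floor_eq_iff space_lebd)
      also have "\<dots> \<in> sets (lebd d)" using K by measurable
      finally show ?thesis .
    qed
    show "indicator K x = (\<Sum>z\<in>cell ` K. indicator (A z) x :: real)" for x
    proof (cases "x \<in> K")
      case True
      then have "(\<Sum>z\<in>cell ` K. indicator (A z) x :: real) = (\<Sum>z\<in>cell ` K. if cell x = z then 1 else 0)"
        by (intro sum.cong) (auto simp: A_def)
      with True fin show ?thesis by simp
    qed (simp add: A_def)
    show "\<bar>x i - y i\<bar> \<le> h" if "x \<in> A z" "y \<in> A z" "i < d" for x y z i
    proof -
      have "\<lfloor>x i / h\<rfloor> = \<lfloor>y i / h\<rfloor>"
        using that by (auto simp: A_def cell_def fun_eq_iff dest!: spec[of _ i])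
      then have "\<bar>x i / h - y i / h\<bar> < 1" by linarith
      then show ?thesis using h by (simp add: diff_divide_distrib[symmetric] abs_div pos_divide_less_eq)
    qed
  qed (auto simp: A_def)
qed

lemma borel_measurable_distd[measurable]: "(\<lambda>x. distd d x y) \<in> borel_measurable (lebd d)"
  unfolding distd_def by measurable

lemma measure_distd_ball_eq:
  assumes D1: "emeasure (lebd d) D = 1"
  shows "measure (lebd d) {x\<in>D. distd d x x0 < \<rho>} = 1 - measure (lebd d) {x\<in>D. \<rho> \<le> distd d x x0}"
proof -
  have D: "D \<in> sets (lebd d)" using D1 emeasure_notin_sets by fastforce
  have "{x\<in>D. distd d x x0 < \<rho>} = D - {x\<in>D. \<rho> \<le> distd d x x0}" by auto
  also have "measure (lebd d) \<dots> = measure (lebd d) D - measure (lebd d) {x\<in>D. \<rho> \<le> distd d x x0}"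
    using D D1 by (intro measure_Diff) auto
  finally show ?thesis using D1 by (simp add: measure_def)
qed

lemma integrable_indicator_component_diff:
  assumes "K \<in> sets (lebd d)" and "emeasure (lebd d) K < \<infinity>"
    and "\<And>x. x \<in> K \<Longrightarrow> \<bar>x i - p i\<bar> \<le> B"
  shows "integrable (lebd d) (\<lambda>x. indicator K x * (x i - p i))"
  using assms by (intro integrable_indicator_mult_bounded) auto

lemma integrable_indicator_innerd:
  assumes K: "K \<in> sets (lebd d)" and K_fin: "emeasure (lebd d) K < \<infinity>"
    and bounded: "\<And>x i. x \<in> K \<Longrightarrow> i < d \<Longrightarrow> \<bar>x i - p i\<bar> \<le> B"
  shows "integrable (lebd d) (\<lambda>x. indicator K x * innerd d a (\<lambda>i. x i - p i))"
proof -
  have "integrable (lebd d) (\<lambda>x. indicator K x * (x i - p i))" if "i < d" for i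
    using bounded[OF _ that] by (rule integrable_indicator_component_diff[OF K K_fin])
  then have "integrable (lebd d) (\<lambda>x. \<Sum>i<d. a i * (indicator K x * (x i - p i)))"
    by (intro Bochner_Integration.integrable_sum integrable_mult_right) auto
  then show ?thesis
    by (simp add: innerd_def sum_distrib_left mult.left_commute)
qed

lemma abs_integral_indicator_innerd_le:
  assumes K: "K \<in> sets (lebd d)" and K_fin: "emeasure (lebd d) K < \<infinity>"
    and bounded: "\<And>x i. x \<in> K \<Longrightarrow> i < d \<Longrightarrow> \<bar>x i - p i\<bar> \<le> B"
    and moments: "\<And>i. i < d \<Longrightarrow> \<bar>\<integral>x. indicator K x * (x i - p i) \<partial>lebd d\<bar> \<le> m"
    and coeffs: "\<And>i. i < d \<Longrightarrow> \<bar>a i\<bar> \<le> G"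
  shows "\<bar>\<integral>x. indicator K x * innerd d a (\<lambda>i. x i - p i) \<partial>lebd d\<bar> \<le> real d * G * m"
proof -
  have int: "integrable (lebd d) (\<lambda>x. indicator K x * (x i - p i))" if "i < d" for i
    using bounded[OF _ that] by (rule integrable_indicator_component_diff[OF K K_fin])
  have "(\<integral>x. indicator K x * innerd d a (\<lambda>i. x i - p i) \<partial>lebd d)
      = (\<Sum>i<d. a i * (\<integral>x. indicator K x * (x i - p i) \<partial>lebd d))"
    using int by (simp add: innerd_def sum_distrib_left mult.left_commute)
  also have "\<bar>\<dots>\<bar> \<le> (\<Sum>i<d. G * m)"
  proof (rule order_trans[OF sum_abs sum_mono])
    fix i assume "i \<in> {..<d}"
    then show "\<bar>a i * (\<integral>x. indicator K x * (x i - p i) \<partial>lebd d)\<bar> \<le> G * m"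
      using coeffs[of i] moments[of i] by (auto simp: abs_mult intro!: mult_mono)
  qed
  finally show ?thesis by simp
qed

lemma set_integral_diff_const:
  fixes f :: "'a \<Rightarrow> real"
  assumes D1: "emeasure M D = 1" and meas: "(\<lambda>x. indicator D x * f x) \<in> borel_measurable M"
    and bound: "\<And>x. x \<in> D \<Longrightarrow> \<bar>f x\<bar> \<le> B"
  shows "(LINT x:D|M. f x) - c = (\<integral>x. indicator D x * (f x - c) \<partial>M)"
proof -
  have D: "D \<in> sets M" using D1 emeasure_notin_sets by fastforce
  have "integrable M (\<lambda>x. indicator D x * f x)"
    by (rule integrable_indicator_mult_bounded[OF D _ meas bound]) (simp add: D1)
  moreover have "integrable M (\<lambda>x. indicator D x * c)"
    by (rule integrable_indicator_mult_bounded[where B="\<bar>c\<bar>"]) (use D D1 in auto)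
  moreover have "(\<integral>x. indicator D x * c \<partial>M) = c"
    using D D1 by (simp add: measure_def)
  ultimately show ?thesis
    by (simp add: set_lebesgue_integral_def right_diff_distrib mult.commute)
qed

lemma abs_set_integral_sub_point_le:
  fixes f lin :: "'a \<Rightarrow> real"
  assumes D1: "emeasure M D = 1" and K: "K \<in> sets M" "K \<subseteq> D"
    and f_meas: "(\<lambda>x. indicator D x * f x) \<in> borel_measurable M"
    and f_bound: "\<And>x. x \<in> D \<Longrightarrow> \<bar>f x\<bar> \<le> 1" and p: "p \<in> D"
    and lin: "integrable M (\<lambda>x. indicator K x * lin x)"
    and remainder: "\<And>x. x \<in> K \<Longrightarrow> \<bar>f x - f p - lin x\<bar> \<le> B"
  shows "\<bar>(LINT x:D|M. f x) - f p\<bar>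
    \<le> 2 * measure M (D - K) + \<bar>\<integral>x. indicator K x * lin x \<partial>M\<bar> + B * measure M K"
proof -
  have D: "D \<in> sets M" using D1 emeasure_notin_sets by fastforce
  have Kc: "D - K \<in> sets M" using D K by auto
  have K_fin: "emeasure M K < \<infinity>" and Kc_fin: "emeasure M (D - K) < \<infinity>"
    using emeasure_mono[of K D M] emeasure_mono[of "D - K" D M] K D D1 by (auto intro: le_less_trans)
  have "(\<lambda>x. indicator (D - K) x * (f x - f p))
      = (\<lambda>x. indicator (D - K) x * (indicator D x * f x) - indicator (D - K) x * f p)"
    by (auto simp: indicator_def fun_eq_iff)
  also have "\<dots> \<in> borel_measurable M" using Kc f_meas by measurable
  finally have Kc_meas: "(\<lambda>x. indicator (D - K) x * (f x - f p)) \<in> borel_measurable M" .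
  have Kc_bound: "\<bar>f x - f p\<bar> \<le> 2" if "x \<in> D - K" for x
    using f_bound[of x] f_bound[OF p] that by auto
  have "(\<lambda>x. indicator K x * (f x - f p - lin x))
      = (\<lambda>x. indicator K x * (indicator D x * f x) - indicator K x * f p - indicator K x * lin x)"
    using K by (auto simp: indicator_def fun_eq_iff)
  also have "\<dots> \<in> borel_measurable M" using K f_meas lin by measurable
  finally have K_meas: "(\<lambda>x. indicator K x * (f x - f p - lin x)) \<in> borel_measurable M" .
  have "(LINT x:D|M. f x) - f p = (\<integral>x. indicator D x * (f x - f p) \<partial>M)"
    by (rule set_integral_diff_const[OF D1 f_meas f_bound])
  also have "\<dots> = (\<integral>x. indicator (D - K) x * (f x - f p) \<partial>M) + (\<integral>x. indicator K x * lin x \<partial>M)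
      + (\<integral>x. indicator K x * (f x - f p - lin x) \<partial>M)"
  proof -
    have "indicator D x * (f x - f p) = indicator (D - K) x * (f x - f p) + indicator K x * lin x
        + indicator K x * (f x - f p - lin x)" for x
      using K by (auto simp: indicator_def algebra_simps)
    then show ?thesis
      using lin integrable_indicator_mult_bounded[OF Kc Kc_fin Kc_meas Kc_bound]
        integrable_indicator_mult_bounded[OF K(1) K_fin K_meas remainder] by simp
  qed
  finally show ?thesis
    using abs_integral_indicator_mult_le[OF Kc Kc_fin Kc_meas Kc_bound]
      abs_integral_indicator_mult_le[OF K(1) K_fin K_meas remainder]
    by fastforce
qed

lemma F2_point_evaluation_error:
  assumes cv: "convex_d d D" and op: "open_d d D" and D1: "emeasure (lebd d) D = 1"
    and sup: "sup_le1 D f" and gr: "is_grad_on d D f g" and lip: "lip_grad_d d D g L"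
    and L: "0 \<le> L" and p: "p \<in> D" "distd d p x0 < \<rho>"
    and grad_p: "\<And>i. i < d \<Longrightarrow> \<bar>g p i\<bar> \<le> G"
    and moments: "\<And>i. i < d \<Longrightarrow>
      \<bar>\<integral>x. indicator {x\<in>D. distd d x x0 < \<rho>} x * (x i - p i) \<partial>lebd d\<bar> \<le> m"
  shows "\<bar>(LINT x:D|lebd d. f x) - f p\<bar>
    \<le> 2 * measure (lebd d) {x\<in>D. \<rho> \<le> distd d x x0} + real d * G * m + 4 * L * \<rho>\<^sup>2"
proof -
  define K where "K = {x\<in>D. distd d x x0 < \<rho>}"
  define lin where "lin x = innerd d (g p) (\<lambda>i. x i - p i)" for x
  have D_Rd: "D \<subseteq> Rd d" using op by (simp add: open_d_def)
  have D: "D \<in> sets (lebd d)" using D1 emeasure_notin_sets by fastforce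
  have K: "K \<in> sets (lebd d)" unfolding K_def using D by measurable
  have K_fin: "emeasure (lebd d) K < \<infinity>"
    using emeasure_mono[of K D "lebd d"] D D1 by (auto simp: K_def intro: le_less_trans)
  have K_le_1: "measure (lebd d) K \<le> 1"
    unfolding K_def measure_distd_ball_eq[OF D1] by simp
  have coord_bound: "\<bar>x i - p i\<bar> \<le> 2 * \<rho>" if "x \<in> K" "i < d" for x i
  proof -
    have "\<bar>x i - p i\<bar> \<le> distd d x x0 + distd d x0 p"
      using abs_component_diff_le_distd[OF that(2)] distd_triangle order_trans by blast
    then show ?thesis using that p by (auto simp: K_def distd_commute)
  qed
  have remainder: "\<bar>f x - f p - lin x\<bar> \<le> 4 * L * \<rho>\<^sup>2" if x: "x \<in> K" for x
  proof -
    have xD: "x \<in> D" using x by (simp add: K_def)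
    have "distd d x p \<le> distd d x x0 + distd d x0 p" by (rule distd_triangle)
    also have "\<dots> \<le> 2 * \<rho>" using x p by (auto simp: K_def distd_commute)
    finally have "L * (distd d x p)\<^sup>2 \<le> L * (2 * \<rho>)\<^sup>2"
      using L by (intro mult_left_mono power_mono) (auto simp: distd_nonneg)
    then show ?thesis
      using lip_grad_d_taylor_bound[OF cv D_Rd gr lip L p(1) xD] by (simp add: lin_def power_mult_distrib)
  qed
  have "\<bar>(LINT x:D|lebd d. f x) - f p\<bar>
      \<le> 2 * measure (lebd d) (D - K) + \<bar>\<integral>x. indicator K x * lin x \<partial>lebd d\<bar>
        + 4 * L * \<rho>\<^sup>2 * measure (lebd d) K"
  proof (rule abs_set_integral_sub_point_le)
    show "(\<lambda>x. indicator D x * f x) \<in> borel_measurable (lebd d)"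
      by (rule is_grad_on_borel_measurable[OF op gr])
    show "integrable (lebd d) (\<lambda>x. indicator K x * lin x)"
      unfolding lin_def by (rule integrable_indicator_innerd[OF K K_fin]) (rule coord_bound)
  qed (use D1 K p remainder sup in \<open>auto simp: K_def sup_le1_def\<close>)
  moreover have "\<bar>\<integral>x. indicator K x * lin x \<partial>lebd d\<bar> \<le> real d * G * m"
    unfolding lin_def
    by (rule abs_integral_indicator_innerd_le[OF K K_fin]) (use coord_bound moments grad_p in \<open>auto simp: K_def\<close>)
  moreover have "4 * L * \<rho>\<^sup>2 * measure (lebd d) K \<le> 4 * L * \<rho>\<^sup>2"
    using K_le_1 L by (simp add: mult_left_le)
  moreover have "{x\<in>D. \<rho> \<le> distd d x x0} = D - K" by (auto simp: K_def)
  ultimately show ?thesis by simp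
qed

lemma exists_point_F2_error_le:
  assumes cv: "convex_d d D" and op: "open_d d D" and D1: "emeasure (lebd d) D = 1"
    and x0: "x0 \<in> D" and L: "0 \<le> L" and \<eta>: "0 < \<eta>"
    and tail: "measure (lebd d) {x\<in>D. \<rho> \<le> distd d x x0} < 1"
  shows "\<exists>p\<in>D. \<forall>f\<in>F2 d D L. \<bar>(LINT x:D|lebd d. f x) - f p\<bar>
           \<le> 2 * measure (lebd d) {x\<in>D. \<rho> \<le> distd d x x0} + 4 * L * \<rho>\<^sup>2 + \<eta>"
proof -
  define K where "K = {x\<in>D. distd d x x0 < \<rho>}"
  have D_Rd: "D \<subseteq> Rd d" using op by (simp add: open_d_def)
  have D: "D \<in> sets (lebd d)" using D1 emeasure_notin_sets by fastforce
  have K: "K \<in> sets (lebd d)" unfolding K_def using D by measurable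
  have K_fin: "emeasure (lebd d) K < \<infinity>"
    using emeasure_mono[of K D "lebd d"] D D1 by (auto simp: K_def intro: le_less_trans)
  have "measure (lebd d) K = 1 - measure (lebd d) {x\<in>D. \<rho> \<le> distd d x x0}"
    unfolding K_def by (rule measure_distd_ball_eq[OF D1])
  then have K_pos: "0 < measure (lebd d) K" and K_le_1: "measure (lebd d) K \<le> 1"
    using tail by simp_all
  then obtain y where "y \<in> K" by force
  then have \<rho>: "0 < \<rho>" using distd_nonneg[of d y x0] by (simp add: K_def)
  obtain r where r: "r > 0" and ball: "\<forall>y\<in>Rd d. distd d x0 y < r \<longrightarrow> y \<in> D"
    using op x0 unfolding open_d_def by blast
  \<comment> \<open>The mesh \<open>h\<close> must be fixed before \<open>p\<close> is found, so the gradient at \<open>p\<close> is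
    bounded via its value at the interior point \<open>x0\<close>.\<close>
  define G where "G = 4 / r + L * r + L * \<rho>"
  have G: "0 \<le> G" using r L \<rho> by (simp add: G_def)
  define h where "h = \<eta> / (real d * G + 1)"
  have dG: "0 \<le> real d * G" using G by simp
  then have h: "0 < h" using \<eta> by (simp add: h_def)
  have "real d * G * h = \<eta> * (real d * G / (real d * G + 1))" by (simp add: h_def)
  also have "\<dots> \<le> \<eta>" using \<eta> dG by (intro mult_left_le) (simp_all add: divide_le_eq_1)
  finally have dGh: "real d * G * h \<le> \<eta>" .
  have bounded: "\<bar>x i - x0 i\<bar> \<le> \<rho>" if "x \<in> K" "i < d" for x i
    using abs_component_diff_le_distd[OF that(2), of x x0] that(1) by (simp add: K_def)
  have cvK: "convex_d d K" unfolding K_def by (rule convex_d_Int_ball[OF cv])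
  have K_Rd: "K \<subseteq> Rd d" using D_Rd by (auto simp: K_def)
  have "\<exists>p\<in>K. \<forall>i<d. \<bar>\<integral>x. indicator K x * (x i - p i) \<partial>lebd d\<bar> \<le> h * measure (lebd d) K"
    by (rule exists_approximate_centroid[where c=x0 and \<rho>=\<rho>, OF K K_fin K_pos cvK K_Rd _ h])
      (rule bounded)
  then obtain p where p: "p \<in> K" and moments:
      "\<And>i. i < d \<Longrightarrow> \<bar>\<integral>x. indicator K x * (x i - p i) \<partial>lebd d\<bar> \<le> h * measure (lebd d) K"
    by blast
  show ?thesis
  proof (intro bexI ballI)
    fix f assume "f \<in> F2 d D L"
    then obtain g where sup: "sup_le1 D f" and gr: "is_grad_on d D f g" and lip: "lip_grad_d d D g L"
      unfolding F2_def by blast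
    have "\<bar>g p i\<bar> \<le> G" if "i < d" for i
      using abs_grad_component_le_near[OF cv D_Rd gr lip L sup x0 r ball that] p
      by (simp add: G_def K_def)
    then have "\<bar>(LINT x:D|lebd d. f x) - f p\<bar>
        \<le> 2 * measure (lebd d) {x\<in>D. \<rho> \<le> distd d x x0} + real d * G * (h * measure (lebd d) K) + 4 * L * \<rho>\<^sup>2"
      using F2_point_evaluation_error[OF cv op D1 sup gr lip L] p moments by (simp add: K_def)
    moreover have "real d * G * (h * measure (lebd d) K) = real d * G * h * measure (lebd d) K"
      by (simp add: mult_ac)
    moreover have "\<dots> \<le> real d * G * h" using K_le_1 dG h by (intro mult_left_le) simp_all
    ultimately show "\<bar>(LINT x:D|lebd d. f x) - f p\<bar>
        \<le> 2 * measure (lebd d) {x\<in>D. \<rho> \<le> distd d x x0} + 4 * L * \<rho>\<^sup>2 + \<eta>"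
      using dGh by linarith
  qed (use p in \<open>simp add: K_def\<close>)
qed

lemma const_in_C1L:
  assumes "0 < L0" "0 < L1" "\<bar>c\<bar> \<le> 1"
  shows "(\<lambda>_. c) \<in> C1L d D L0 L1"
proof -
  define g where "g = (\<lambda>x::nat\<Rightarrow>real. restrict (\<lambda>i. 0::real) {..<d})"
  have inner_g: "innerd d (g x) v = 0" for x v by (simp add: innerd_def g_def)
  have dist_g: "distd d (g x) (g y) = 0" for x y by (simp add: distd_def g_def)
  have "is_grad_on d D (\<lambda>_. c) g"
    unfolding is_grad_on_def
  proof (intro ballI conjI allI impI)
    show "g x \<in> Rd d" for x by (simp add: g_def restrict_in_Rd)
    show "\<exists>\<delta>>0. \<forall>y\<in>D. distd d y x < \<delta> \<longrightarrow> \<bar>c - c - innerd d (g x) (\<lambda>i. y i - x i)\<bar> \<le> e * distd d y x"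
      if "0 < e" for x e using that by (intro exI[of _ 1]) (auto simp: inner_g distd_nonneg)
  qed
  moreover have "cont_on_d d D g" unfolding cont_on_d_def by (auto simp: dist_g)
  moreover have "lip_grad_d d D g L1"
    unfolding lip_grad_d_def using assms by (auto simp: dist_g distd_nonneg)
  moreover have "lip_d d D (\<lambda>_. c) L0"
    unfolding lip_d_def using assms by (auto simp: distd_nonneg)
  moreover have "sup_le1 D (\<lambda>_. c)" using assms by (simp add: sup_le1_def)
  ultimately show ?thesis unfolding C1L_def by blast
qed

lemma C1L_subset_F2: "C1L d D L0 L1 \<subseteq> F2 d D L1"
  unfolding C1L_def F2_def by blast

lemma achieves_subset: "achieves d D F n \<epsilon> \<Longrightarrow> F' \<subseteq> F \<Longrightarrow> achieves d D F' n \<epsilon>"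
  unfolding achieves_def by blast

lemma not_achieves_0_C1L:
  assumes "0 < L0" "0 < L1" "\<epsilon> < 1" and D1: "emeasure (lebd d) D = 1"
  shows "\<not> achieves d D (C1L d D L0 L1) 0 \<epsilon>"
proof
  assume "achieves d D (C1L d D L0 L1) 0 \<epsilon>"
  then obtain P \<phi> where err: "\<forall>f\<in>C1L d D L0 L1. \<bar>(LINT x:D|lebd d. f x) - \<phi> (info P f 0)\<bar> \<le> \<epsilon>"
    unfolding achieves_def by blast
  have "D \<in> sets (lebd d)" using D1 emeasure_notin_sets by fastforce
  then have int_const: "(LINT x:D|lebd d. c) = c" for c :: real
    using D1 by (simp add: set_lebesgue_integral_def measure_def)
  have "\<bar>1 - \<phi> []\<bar> \<le> \<epsilon>" "\<bar>-1 - \<phi> []\<bar> \<le> \<epsilon>"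
    using err const_in_C1L[OF assms(1,2), of 1 d D] const_in_C1L[OF assms(1,2), of "-1" d D]
    by (force simp: int_const)+
  then show False using assms(3) by linarith
qed

lemma achieves_1_if_point_error_le:
  assumes "p \<in> D" "\<forall>f\<in>F. \<bar>(LINT x:D|lebd d. f x) - f p\<bar> \<le> \<epsilon>"
  shows "achieves d D F 1 \<epsilon>"
  unfolding achieves_def
  by (rule exI[of _ "\<lambda>k ys. p"], rule exI[of _ "\<lambda>ys. hd ys"]) (use assms in auto)

lemma n_compl_eq_1:
  assumes "achieves d D F 1 \<epsilon>" "\<not> achieves d D F 0 \<epsilon>"
  shows "n_compl d D F \<epsilon> = 1"
  unfolding n_compl_def
proof (rule Least_equality)
  show "achieves d D F 1 \<epsilon>" by (rule assms(1))
  show "1 \<le> m" if "achieves d D F m \<epsilon>" for m using assms(2) that by (cases m) auto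
qed

lemma n_compl_C1L_F2_eq_1:
  assumes cv: "convex_d d D" and op: "open_d d D" and D1: "emeasure (lebd d) D = 1"
    and x0: "x0 \<in> D" and L0: "0 < L0" and L1: "0 < L1" and \<epsilon>: "\<epsilon> < 1"
    and small: "2 * measure (lebd d) {x\<in>D. \<rho> \<le> distd d x x0} + 4 * L1 * \<rho>\<^sup>2 < \<epsilon>"
  shows "n_compl d D (C1L d D L0 L1) \<epsilon> = 1 \<and> n_compl d D (F2 d D L1) \<epsilon> = 1"
proof -
  have "0 \<le> 4 * L1 * \<rho>\<^sup>2" using L1 by simp
  then have tail: "measure (lebd d) {x\<in>D. \<rho> \<le> distd d x x0} < 1" using small \<epsilon> by linarith
  obtain p where "p \<in> D" and "\<forall>f\<in>F2 d D L1. \<bar>(LINT x:D|lebd d. f x) - f p\<bar> \<le> \<epsilon>"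
    using exists_point_F2_error_le[OF cv op D1 x0 _ _ tail, of L1 "\<epsilon> - (2 * measure (lebd d)
      {x\<in>D. \<rho> \<le> distd d x x0} + 4 * L1 * \<rho>\<^sup>2)"] L1 small by auto
  then have F2: "achieves d D (F2 d D L1) 1 \<epsilon>" by (rule achieves_1_if_point_error_le)
  have C1L: "\<not> achieves d D (C1L d D L0 L1) 0 \<epsilon>" by (rule not_achieves_0_C1L[OF L0 L1 \<epsilon> D1])
  show ?thesis
    using n_compl_eq_1[OF achieves_subset[OF F2 C1L_subset_F2] C1L]
      n_compl_eq_1[OF F2] C1L achieves_subset[OF _ C1L_subset_F2] by blast
qed

theorem proposition4p5:
  fixes D :: "nat \<Rightarrow> (nat \<Rightarrow> real) set"
    and L0 L1 :: "nat \<Rightarrow> real"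
  assumes "\<forall>d\<ge>1. convex_d d (D d)"
    and "property_P D"
    and "\<forall>d. L0 d > 0 \<and> L1 d > 0"
    and "(\<lambda>d. L1 d * real d) \<longlonglongrightarrow> 0"
  shows "\<forall>\<epsilon>::real. 0 < \<epsilon> \<and> \<epsilon> < 1 \<longrightarrow> (\<exists>d0. \<forall>d\<ge>d0.
           n_compl d (D d) (C1L d (D d) (L0 d) (L1 d)) \<epsilon> = 1 \<and>
           n_compl d (D d) (F2 d (D d) (L1 d)) \<epsilon> = 1)"
proof (intro allI impI)
  fix \<epsilon> :: real assume \<epsilon>: "0 < \<epsilon> \<and> \<epsilon> < 1"
  obtain xs R where dom: "\<forall>d\<ge>1. open_d d (D d) \<and> emeasure (lebd d) (D d) = 1"
    and xs: "\<forall>d\<ge>1. xs d \<in> D d"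
    and tail: "(\<lambda>d. measure (lebd d) {x \<in> D d. R * sqrt (real d) \<le> distd d x (xs d)}) \<longlonglongrightarrow> 0"
    using assms(2) unfolding property_P_def by blast
  have "(\<lambda>d. 4 * R\<^sup>2 * (L1 d * real d)) \<longlonglongrightarrow> 0"
    using tendsto_mult_right_zero[OF assms(4)] by simp
  then have "eventually (\<lambda>d. 4 * L1 d * (R * sqrt (real d))\<^sup>2 < \<epsilon> / 2) sequentially"
    using \<epsilon> by (intro order_tendstoD(2)) (auto simp: power_mult_distrib mult_ac)
  moreover have "eventually (\<lambda>d. measure (lebd d) {x \<in> D d. R * sqrt (real d) \<le> distd d x (xs d)}
      < \<epsilon> / 4) sequentially"
    using \<epsilon> by (intro order_tendstoD(2)[OF tail]) auto
  ultimately have "eventually (\<lambda>d. d \<ge> 1 \<and>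
      2 * measure (lebd d) {x \<in> D d. R * sqrt (real d) \<le> distd d x (xs d)}
        + 4 * L1 d * (R * sqrt (real d))\<^sup>2 < \<epsilon>) sequentially"
    using eventually_ge_at_top[of 1] by eventually_elim auto
  then show "\<exists>d0. \<forall>d\<ge>d0. n_compl d (D d) (C1L d (D d) (L0 d) (L1 d)) \<epsilon> = 1 \<and>
      n_compl d (D d) (F2 d (D d) (L1 d)) \<epsilon> = 1"
    unfolding eventually_sequentially
    using n_compl_C1L_F2_eq_1 assms(1,3) dom xs \<epsilon> by (meson le_trans)
qed

end
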